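(* Let $K$ be a complete non-archimedean field, $R$ a Banach $K$-algebra, and $R_0\subseteq R_1\subseteq\cdots$ a nested collection of complete subrings of $R$ such that $\bigcup_hR_h$ is dense in $R$. Let $s_1,\dots,s_N\in R\langle\theta_1,\dots,\theta_n\rangle$. For every $\varepsilon>0$ there exist an integer $h$ and elements $\tilde s_1,\dots,\tilde s_N\in R_h\langle\theta_1,\dots,\theta_n\rangle$ such that: (1) $|s_\alpha-\tilde s_\alpha|<\varepsilon$ for each $\alpha$; (2) for all $\alpha,\beta\in\{1,\dots,N\}$ and $k\in\{1,\dots,n\}$ with $s_\alpha|_{\theta_k=0}=s_\beta|_{\theta_k=0}$ one has $\tilde s_\alpha|_{\theta_k=0}=\tilde s_\beta|_{\theta_k=0}$; (3) for all $\alpha,\beta$ and $k$ with $s_\alpha|_{\theta_k=1}=s_\beta|_{\theta_k=1}$ one has $\tilde s_\alpha|_{\theta_k=1}=\tilde s_\beta|_{\theta_k=1}$; (4) for every $\alpha$, if $s_\alpha|_{\theta_1=1}\in R_{h'}\langle\theta_1,\dots,\theta_n\rangle$ for some $h'$, then $\tilde s_\alpha|_{\theta_1=1}=s_\alpha|_{\theta_1=1}$.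
   Context: $R\langle\theta_1,\dots,\theta_n\rangle$ is the ring of strictly convergent power series over $R$ with the Gauss norm $|\sum a_I\theta^I|=\max_I\|a_I\|$, and $R_h\langle\theta\rangle$ is the corresponding subring. $s|_{\theta_k=\epsilon}$ denotes the image of $s$ under the substitution $\theta_k=\epsilon$. *)

theory Defs
  imports Complex_Main
begin

definition cauchy_wrt :: "('a::ab_group_add \<Rightarrow> real) \<Rightarrow> (nat \<Rightarrow> 'a) \<Rightarrow> bool" where
  "cauchy_wrt nm f \<longleftrightarrow> (\<forall>e>0. \<exists>M. \<forall>i\<ge>M. \<forall>j\<ge>M. nm (f i - f j) < e)"

definition conv_to :: "('a::ab_group_add \<Rightarrow> real) \<Rightarrow> (nat \<Rightarrow> 'a) \<Rightarrow> 'a \<Rightarrow> bool" where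
  "conv_to nm f L \<longleftrightarrow> (\<forall>e>0. \<exists>M. \<forall>i\<ge>M. nm (f i - L) < e)"

definition complete_nonarch_field :: "('k::field \<Rightarrow> real) \<Rightarrow> bool" where
  "complete_nonarch_field nk \<longleftrightarrow>
     (\<forall>x. nk x \<ge> 0) \<and> (\<forall>x. nk x = 0 \<longleftrightarrow> x = 0) \<and>
     (\<forall>x y. nk (x * y) = nk x * nk y) \<and>
     (\<forall>x y. nk (x + y) \<le> max (nk x) (nk y)) \<and>
     (\<forall>f. cauchy_wrt nk f \<longrightarrow> (\<exists>L. conv_to nk f L))"

definition banach_algebra :: "('k::field \<Rightarrow> real) \<Rightarrow> ('k \<Rightarrow> 'r::ring_1 \<Rightarrow> 'r) \<Rightarrow> ('r \<Rightarrow> real) \<Rightarrow> bool" where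
  "banach_algebra nk sm nr \<longleftrightarrow>
     (\<forall>x. nr x \<ge> 0) \<and> (\<forall>x. nr x = 0 \<longleftrightarrow> x = 0) \<and>
     (\<forall>x y. nr (x + y) \<le> max (nr x) (nr y)) \<and>
     (\<forall>x y. nr (x * y) \<le> nr x * nr y) \<and>
     (\<forall>a x. nr (sm a x) = nk a * nr x) \<and>
     (\<forall>a b x. sm (a + b) x = sm a x + sm b x) \<and>
     (\<forall>a x y. sm a (x + y) = sm a x + sm a y) \<and>
     (\<forall>a b x. sm (a * b) x = sm a (sm b x)) \<and>
     (\<forall>x. sm 1 x = x) \<and>
     (\<forall>a x y. sm a (x * y) = sm a x * y) \<and>
     (\<forall>a x y. sm a (x * y) = x * sm a y) \<and>
     (\<forall>f. cauchy_wrt nr f \<longrightarrow> (\<exists>L. conv_to nr f L))"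

definition subring_of :: "'r::ring_1 set \<Rightarrow> bool" where
  "subring_of S \<longleftrightarrow> 0 \<in> S \<and> 1 \<in> S \<and>
     (\<forall>x\<in>S. \<forall>y\<in>S. x + y \<in> S \<and> x - y \<in> S \<and> x * y \<in> S)"

definition complete_subring :: "('r::ring_1 \<Rightarrow> real) \<Rightarrow> 'r set \<Rightarrow> bool" where
  "complete_subring nr S \<longleftrightarrow> subring_of S \<and>
     (\<forall>f. (\<forall>i. f i \<in> S) \<longrightarrow> cauchy_wrt nr f \<longrightarrow> (\<exists>L\<in>S. conv_to nr f L))"

text \<open>Multi-indices are functions I :: nat \<Rightarrow> nat; I k is the exponent of theta_k,
  variables are indexed by 1..n. A series is its coefficient function.\<close>

type_synonym 'r pseries = "(nat \<Rightarrow> nat) \<Rightarrow> 'r"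

definition tate :: "('r::ring_1 \<Rightarrow> real) \<Rightarrow> nat \<Rightarrow> 'r set \<Rightarrow> 'r pseries \<Rightarrow> bool" where
  "tate nr n S s \<longleftrightarrow>
     (\<forall>I. s I \<in> S) \<and>
     (\<forall>I. s I \<noteq> 0 \<longrightarrow> (\<forall>i. i \<notin> {1..n} \<longrightarrow> I i = 0)) \<and>
     (\<forall>e>0. finite {I. nr (s I) \<ge> e})"

definition gauss :: "('r \<Rightarrow> real) \<Rightarrow> 'r pseries \<Rightarrow> real" where
  "gauss nr s = Sup (range (\<lambda>I. nr (s I)))"

definition series_sum :: "('r::ring_1 \<Rightarrow> real) \<Rightarrow> (nat \<Rightarrow> 'r) \<Rightarrow> 'r" where
  "series_sum nr f = (THE L. conv_to nr (\<lambda>N. \<Sum>m<N. f m) L)"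

definition subst0 :: "nat \<Rightarrow> 'r::ring_1 pseries \<Rightarrow> 'r pseries" where
  "subst0 k s = (\<lambda>I. if I k = 0 then s I else 0)"

definition subst1 :: "('r::ring_1 \<Rightarrow> real) \<Rightarrow> nat \<Rightarrow> 'r pseries \<Rightarrow> 'r pseries" where
  "subst1 nr k s = (\<lambda>I. if I k = 0 then series_sum nr (\<lambda>m. s (I(k := m))) else 0)"

end

theory Submission
  imports Defs
begin

text \<open>Change coordinates one variable at a time: along \<open>\<theta>\<^sub>k\<close> replace the coefficients
  \<open>a\<^sub>0, a\<^sub>1, \<dots>\<close> by \<open>a\<^sub>0\<close>, \<open>\<Sum> a\<^sub>m\<close> and the tails \<open>\<Sum>\<^bsub>j \<ge> m\<^esub> a\<^sub>j\<close>
  (\<open>m \<ge> 2\<close>), i.e. by the values at \<open>\<theta>\<^sub>k = 0\<close> and \<open>\<theta>\<^sub>k = 1\<close> and the tails.  In an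
  ultrametric ring the inverse change does not increase norms, both directions preserve vanishing at
  infinity and complete subrings, and in the new coordinates the substitutions \<open>\<theta>\<^sub>k = 0\<close> and
  \<open>\<theta>\<^sub>k = 1\<close> select the coordinates whose \<open>k\<close>-th index is \<open>0\<close> resp. \<open>1\<close>.

  Only finitely many coordinates of the \<open>s\<^sub>\<alpha>\<close> have norm \<open>\<ge> \<epsilon>/2\<close>.  Choose \<open>h\<close> such that
  \<open>R\<^sub>h\<close> approximates all of them within \<open>\<epsilon>/2\<close>, and apply to every coordinate one and the same
  map \<open>g\<close> that is the identity on \<open>R\<^sub>h\<close>, never increases norms, and moves each approximable
  value into \<open>R\<^sub>h\<close> by less than \<open>\<epsilon>/2\<close>.  Coordinates that agree are rounded alike, which gives
  (2) and (3); (4) holds because \<open>g\<close> fixes the coordinates of \<open>s\<^sub>\<alpha>|\<^sub>\<theta>\<^sub>1\<^sub>=\<^sub>1\<close> once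
  they lie in \<open>R\<^sub>h\<close>.\<close>

locale complete_ultrametric =
  fixes nr :: "'r::ring_1 \<Rightarrow> real"
  assumes nr_nonneg: "nr x \<ge> 0"
    and nr_eq_0_iff: "nr x = 0 \<longleftrightarrow> x = 0"
    and nr_add_le_max: "nr (x + y) \<le> max (nr x) (nr y)"
    and nr_minus [simp]: "nr (- x) = nr x"
    and cauchy_convergent: "cauchy_wrt nr f \<Longrightarrow> \<exists>L. conv_to nr f L"

lemma banach_algebra_complete_ultrametric:
  assumes F: "complete_nonarch_field nk" and B: "banach_algebra nk sm nr"
  shows "complete_ultrametric nr"
proof
  have sm_add: "\<And>a b x. sm (a + b) x = sm a x + sm b x" and sm_one: "\<And>x. sm 1 x = x"
    and nr_sm: "\<And>a x. nr (sm a x) = nk a * nr x" using B unfolding banach_algebra_def by blast+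
  have nk_mult: "\<And>x y. nk (x * y) = nk x * nk y" and nk_eq_0: "\<And>x. nk x = 0 \<longleftrightarrow> x = 0"
    and nk_nonneg: "\<And>x. nk x \<ge> 0" using F unfolding complete_nonarch_field_def by blast+
  fix x
  have "sm 0 x = 0" using sm_add[of 0 0 x] by simp
  then have "sm (-1) x = - x" using sm_add[of "-1" 1 x] sm_one by (simp add: eq_neg_iff_add_eq_0)
  moreover have "nk 1 = 1" using nk_mult[of 1 1] nk_eq_0[of 1] by simp
  then have "nk (-1) = 1"
    using nk_mult[of "-1" "-1"] nk_nonneg[of "-1"] by (simp add: power2_eq_1_iff flip: power2_eq_square)
  ultimately show "nr (- x) = nr x" using nr_sm[of "-1" x] by simp
qed (use B in \<open>auto simp: banach_algebra_def\<close>)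

context complete_ultrametric
begin

lemma nr_0 [simp]: "nr 0 = 0"
  by (simp add: nr_eq_0_iff)

lemma nr_minus_commute: "nr (x - y) = nr (y - x)"
  using nr_minus[of "y - x"] by simp

lemma add_less: "nr x < e \<Longrightarrow> nr y < e \<Longrightarrow> nr (x + y) < e"
  using nr_add_le_max[of x y] by linarith

lemma diff_less: "nr x < e \<Longrightarrow> nr y < e \<Longrightarrow> nr (x - y) < e"
  using add_less[of x e "- y"] by simp

lemma nr_le_max_diff: "nr y \<le> max (nr x) (nr (x - y))"
  using nr_add_le_max[of x "y - x"] nr_minus_commute[of y x] by simp

lemma sum_less: "finite A \<Longrightarrow> e > 0 \<Longrightarrow> (\<And>m. m \<in> A \<Longrightarrow> nr (a m) < e) \<Longrightarrow> nr (sum a A) < e"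
  by (induction A rule: finite_induct) (auto intro!: add_less)

lemma conv_to_unique: "conv_to nr f L \<Longrightarrow> conv_to nr f L' \<Longrightarrow> L = L'"
proof (rule ccontr)
  assume L: "conv_to nr f L" and L': "conv_to nr f L'" and "L \<noteq> L'"
  then have d: "nr (L - L') > 0" using nr_nonneg[of "L - L'"] nr_eq_0_iff[of "L - L'"] by auto
  obtain M M' where "\<forall>i\<ge>M. nr (f i - L) < nr (L - L')" "\<forall>i\<ge>M'. nr (f i - L') < nr (L - L')"
    using L L' d unfolding conv_to_def by blast
  then have "nr (f (max M M') - L') < nr (L - L')" "nr (f (max M M') - L) < nr (L - L')" by simp_all
  then have "nr ((f (max M M') - L') - (f (max M M') - L)) < nr (L - L')" by (rule diff_less)
  then show False by simp
qed

lemma series_sum_eqI: assumes "conv_to nr (\<lambda>N. \<Sum>m<N. a m) L" shows "series_sum nr a = L"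
  unfolding series_sum_def using assms by (rule the_equality) (rule conv_to_unique[OF _ assms])

lemma conv_to_0_iff: "conv_to nr a 0 \<longleftrightarrow> (\<forall>e>0. \<exists>M. \<forall>m\<ge>M. nr (a m) < e)"
  by (simp add: conv_to_def)

lemma cauchy_partial_sums: assumes "conv_to nr a 0" shows "cauchy_wrt nr (\<lambda>N. \<Sum>m<N. a m)"
  unfolding cauchy_wrt_def
proof (intro allI impI)
  fix e :: real assume e: "e > 0"
  obtain M where M: "\<forall>m\<ge>M. nr (a m) < e" using assms e unfolding conv_to_0_iff by blast
  have le: "nr ((\<Sum>m<i. a m) - (\<Sum>m<j. a m)) < e" if "M \<le> j" "j \<le> i" for i j
  proof -
    have "(\<Sum>m<i. a m) - (\<Sum>m<j. a m) = (\<Sum>m\<in>{j..<i}. a m)"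
      using sum.atLeastLessThan_concat[of 0 j i a] that
      by (simp add: atLeast0LessThan) (metis add_diff_cancel_left')
    also have "nr \<dots> < e" using M that e by (intro sum_less) auto
    finally show ?thesis .
  qed
  show "\<exists>M. \<forall>i\<ge>M. \<forall>j\<ge>M. nr ((\<Sum>m<i. a m) - (\<Sum>m<j. a m)) < e"
  proof (intro exI allI impI)
    fix i j assume "M \<le> i" "M \<le> j"
    then show "nr ((\<Sum>m<i. a m) - (\<Sum>m<j. a m)) < e"
    proof (cases "j \<le> i")
      case False
      then show ?thesis using le[of i j] \<open>M \<le> i\<close> nr_minus_commute[of "\<Sum>m<i. a m"] by simp
    qed (use le \<open>M \<le> j\<close> in simp)
  qed
qed

lemma series_sum_conv: "conv_to nr a 0 \<Longrightarrow> conv_to nr (\<lambda>N. \<Sum>m<N. a m) (series_sum nr a)"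
  by (metis cauchy_convergent cauchy_partial_sums series_sum_eqI)

lemma series_sum_mem:
  assumes S: "complete_subring nr S" and a: "\<And>m. a m \<in> S" and null: "conv_to nr a 0"
  shows "series_sum nr a \<in> S"
proof -
  have sub: "subring_of S"
    and complete: "\<And>f. \<forall>i. f i \<in> S \<Longrightarrow> cauchy_wrt nr f \<Longrightarrow> \<exists>L\<in>S. conv_to nr f L"
    using S unfolding complete_subring_def by blast+
  have "(\<Sum>m<N. a m) \<in> S" for N
    using sub a by (induction N) (simp_all add: subring_of_def)
  then obtain L where "L \<in> S" "conv_to nr (\<lambda>N. \<Sum>m<N. a m) L"
    using complete[OF _ cauchy_partial_sums[OF null]] \<open>\<And>N. (\<Sum>m<N. a m) \<in> S\<close> by blast
  then show ?thesis using series_sum_eqI by simp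
qed

lemma series_sum_less:
  assumes null: "conv_to nr a 0" and e: "e > 0" and a: "\<And>m. nr (a m) < e"
  shows "nr (series_sum nr a) < e"
proof -
  obtain M where M: "nr ((\<Sum>m<M. a m) - series_sum nr a) < e"
    using series_sum_conv[OF null] e unfolding conv_to_def by blast
  have "nr (\<Sum>m<M. a m) < e" using a e by (intro sum_less) auto
  from diff_less[OF this M] show ?thesis by simp
qed

lemma conv_to_0_shift: "conv_to nr a 0 \<Longrightarrow> conv_to nr (\<lambda>j. a (j + c)) 0"
  unfolding conv_to_0_iff by (metis trans_le_add1)

lemma conv_to_0_diff:
  assumes "conv_to nr a 0" "conv_to nr b 0" shows "conv_to nr (\<lambda>m. a m - b m) 0"
  unfolding conv_to_0_iff
proof (intro allI impI)
  fix e :: real assume "e > 0"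
  then obtain M M' where "\<forall>m\<ge>M. nr (a m) < e" "\<forall>m\<ge>M'. nr (b m) < e"
    using assms unfolding conv_to_0_iff by blast
  then show "\<exists>M. \<forall>m\<ge>M. nr (a m - b m) < e" by (intro exI[of _ "max M M'"]) (simp add: diff_less)
qed

lemma conv_to_iff_diff: "conv_to nr f L \<longleftrightarrow> conv_to nr (\<lambda>i. f i - L) 0"
  by (simp add: conv_to_def)

lemma series_sum_zero [simp]: "series_sum nr (\<lambda>_. 0) = 0"
  by (rule series_sum_eqI) (simp add: conv_to_def)

lemma series_sum_Suc:
  assumes null: "conv_to nr a 0"
  shows "series_sum nr a = a 0 + series_sum nr (\<lambda>j. a (Suc j))"
proof -
  have "conv_to nr (\<lambda>N. \<Sum>m<N. a (Suc m)) (series_sum nr a - a 0)"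
    unfolding conv_to_def
  proof (intro allI impI)
    fix e :: real assume "e > 0"
    then obtain M where "\<forall>i\<ge>M. nr ((\<Sum>m<i. a m) - series_sum nr a) < e"
      using series_sum_conv[OF null] unfolding conv_to_def by blast
    moreover have "(\<Sum>m<Suc i. a m) - series_sum nr a = (\<Sum>m<i. a (Suc m)) - (series_sum nr a - a 0)"
      for i by (simp only: sum.lessThan_Suc_shift) (simp add: algebra_simps)
    ultimately show "\<exists>M. \<forall>i\<ge>M. nr ((\<Sum>m<i. a (Suc m)) - (series_sum nr a - a 0)) < e"
      by (metis le_SucI)
  qed
  then have "series_sum nr (\<lambda>j. a (Suc j)) = series_sum nr a - a 0" by (rule series_sum_eqI)
  then show ?thesis by simp
qed

lemma series_sum_tail:
  "conv_to nr a 0 \<Longrightarrow> series_sum nr (\<lambda>j. a (j + m)) = a m + series_sum nr (\<lambda>j. a (j + Suc m))"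
  using series_sum_Suc[OF conv_to_0_shift, of a m] by simp

lemma series_sum_single:
  assumes "\<And>m. m \<noteq> 0 \<Longrightarrow> a m = 0" shows "series_sum nr a = a 0"
proof -
  have "conv_to nr a 0" using assms by (auto simp: conv_to_0_iff intro!: exI[of _ 1])
  then have "series_sum nr a = a 0 + series_sum nr (\<lambda>j. a (Suc j))" by (rule series_sum_Suc)
  also have "(\<lambda>j. a (Suc j)) = (\<lambda>_. 0)" using assms by simp
  finally show ?thesis by simp
qed

lemma series_sum_telescope:
  assumes "conv_to nr y 0"
  shows "series_sum nr (\<lambda>j. y (j + c) - y (Suc (j + c))) = y c"
proof (rule series_sum_eqI)
  have partial: "(\<Sum>j<i. y (j + c) - y (Suc (j + c))) - y c = - y (i + c)" for i
  proof -
    have "(\<Sum>j<i. y (j + c) - y (Suc (j + c))) = y (0 + c) - y (i + c)"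
      using sum_lessThan_telescope'[of "\<lambda>j. y (j + c)" i] by simp
    then show ?thesis by simp
  qed
  have "conv_to nr (\<lambda>i. - y (i + c)) 0"
    using conv_to_0_shift[OF assms, of c] by (simp add: conv_to_0_iff)
  then show "conv_to nr (\<lambda>N. \<Sum>j<N. y (j + c) - y (Suc (j + c))) (y c)"
    by (subst conv_to_iff_diff) (simp only: partial)
qed

lemma series_sum_diff:
  assumes a: "conv_to nr a 0" and b: "conv_to nr b 0"
  shows "series_sum nr (\<lambda>m. a m - b m) = series_sum nr a - series_sum nr b"
proof (rule series_sum_eqI)
  have eq: "(\<lambda>i. (\<Sum>m<i. a m - b m) - (series_sum nr a - series_sum nr b))
      = (\<lambda>i. ((\<Sum>m<i. a m) - series_sum nr a) - ((\<Sum>m<i. b m) - series_sum nr b))"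
    by (simp add: fun_eq_iff sum_subtractf)
  have "conv_to nr (\<lambda>i. (\<Sum>m<i. a m) - series_sum nr a) 0"
    and "conv_to nr (\<lambda>i. (\<Sum>m<i. b m) - series_sum nr b) 0"
    using series_sum_conv[OF a] series_sum_conv[OF b] by (simp_all add: conv_to_def)
  from conv_to_0_diff[OF this]
  show "conv_to nr (\<lambda>N. \<Sum>m<N. a m - b m) (series_sum nr a - series_sum nr b)"
    unfolding conv_to_iff_diff[of _ "series_sum nr a - series_sum nr b"] eq .
qed

end

definition line_to_coords :: "('r::ring_1 \<Rightarrow> real) \<Rightarrow> (nat \<Rightarrow> 'r) \<Rightarrow> nat \<Rightarrow> 'r" where
  "line_to_coords nr a m =
     (if m = 0 then a 0 else if m = 1 then series_sum nr a else series_sum nr (\<lambda>j. a (j + m)))"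

definition line_from_coords :: "(nat \<Rightarrow> 'r::ring_1) \<Rightarrow> nat \<Rightarrow> 'r" where
  "line_from_coords y m =
     (if m = 0 then y 0 else if m = 1 then y 1 - y 0 - y 2 else y m - y (Suc m))"

context complete_ultrametric
begin

lemma line_from_coords_less: "(\<And>m. nr (y m) < d) \<Longrightarrow> nr (line_from_coords y i) < d"
  unfolding line_from_coords_def by (auto intro!: diff_less)

lemma conv_to_0_line_from_coords:
  assumes "conv_to nr y 0" shows "conv_to nr (line_from_coords y) 0"
  unfolding conv_to_0_iff
proof (intro allI impI)
  fix e :: real assume "e > 0"
  moreover have "conv_to nr (\<lambda>m. y m - y (Suc m)) 0"
    using conv_to_0_diff[OF assms conv_to_0_shift[OF assms, of 1]] by simp
  ultimately obtain M where "\<forall>m\<ge>M. nr (y m - y (Suc m)) < e" unfolding conv_to_0_iff by blast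
  then show "\<exists>M. \<forall>m\<ge>M. nr (line_from_coords y m) < e"
    by (intro exI[of _ "max M 2"]) (simp add: line_from_coords_def)
qed

lemma series_sum_line_from_coords:
  assumes y: "conv_to nr y 0" shows "series_sum nr (line_from_coords y) = y 1"
proof -
  have null: "conv_to nr (line_from_coords y) 0" using conv_to_0_line_from_coords[OF y] .
  have "series_sum nr (line_from_coords y)
      = line_from_coords y 0 + (line_from_coords y 1 + series_sum nr (\<lambda>j. line_from_coords y (j + 2)))"
    using series_sum_tail[OF null, of 0] series_sum_tail[OF null, of 1] by (simp add: numeral_2_eq_2)
  also have "(\<lambda>j. line_from_coords y (j + 2)) = (\<lambda>j. y (j + 2) - y (Suc (j + 2)))"
    by (simp add: line_from_coords_def)
  finally show ?thesis
    using series_sum_telescope[OF y, of 2] by (simp add: line_from_coords_def[of y 0] line_from_coords_def[of y "Suc 0"])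
qed

lemma line_to_coords_from_coords:
  assumes y: "conv_to nr y 0" shows "line_to_coords nr (line_from_coords y) m = y m"
proof -
  consider "m = 0" | "m = 1" | "m \<ge> 2" by linarith
  then show ?thesis
  proof cases
    case 3
    then have "(\<lambda>j. line_from_coords y (j + m)) = (\<lambda>j. y (j + m) - y (Suc (j + m)))"
      by (simp add: line_from_coords_def)
    with 3 show ?thesis using series_sum_telescope[OF y, of m] by (simp add: line_to_coords_def)
  qed (simp_all add: line_to_coords_def line_from_coords_def series_sum_line_from_coords[OF y])
qed

lemma line_from_coords_to_coords:
  assumes a: "conv_to nr a 0" shows "line_from_coords (line_to_coords nr a) m = a m"
proof -
  note tail = series_sum_tail[OF a]
  have "series_sum nr a = a 0 + (a 1 + series_sum nr (\<lambda>j. a (j + 2)))"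
    using tail[of 0] tail[of 1] by (simp add: numeral_2_eq_2)
  then show ?thesis using tail[of m]
    by (simp add: line_to_coords_def line_from_coords_def)
qed

lemma series_sum_line_from_coords_family:
  assumes l: "\<And>c. conv_to nr (l c) 0"
  shows "series_sum nr (\<lambda>m. line_from_coords (\<lambda>c. l c m) i)
    = line_from_coords (\<lambda>c. series_sum nr (l c)) i"
proof -
  have "series_sum nr (\<lambda>m. l 1 m - l 0 m - l 2 m)
      = series_sum nr (l 1) - series_sum nr (l 0) - series_sum nr (l 2)"
    using series_sum_diff[OF conv_to_0_diff[OF l l] l] series_sum_diff[OF l l] by simp
  then show ?thesis using series_sum_diff[OF l l] by (simp add: line_from_coords_def)
qed

end

definition to_coords :: "('r::ring_1 \<Rightarrow> real) \<Rightarrow> nat \<Rightarrow> 'r pseries \<Rightarrow> 'r pseries" where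
  "to_coords nr k f J = line_to_coords nr (\<lambda>m. f (J(k := m))) (J k)"

definition from_coords :: "nat \<Rightarrow> 'r::ring_1 pseries \<Rightarrow> 'r pseries" where
  "from_coords k y J = line_from_coords (\<lambda>m. y (J(k := m))) (J k)"

primrec to_coords_list :: "('r::ring_1 \<Rightarrow> real) \<Rightarrow> nat list \<Rightarrow> 'r pseries \<Rightarrow> 'r pseries" where
  "to_coords_list nr [] f = f"
| "to_coords_list nr (k # ks) f = to_coords nr k (to_coords_list nr ks f)"

primrec from_coords_list :: "nat list \<Rightarrow> 'r::ring_1 pseries \<Rightarrow> 'r pseries" where
  "from_coords_list [] y = y"
| "from_coords_list (k # ks) y = from_coords_list ks (from_coords k y)"

text \<open>The face \<open>\<theta>\<^sub>k = 1\<close> in coordinates, moved to index \<open>0\<close> in direction \<open>k\<close> as in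
  \<open>subst1\<close>.\<close>

definition slice1 :: "nat \<Rightarrow> 'r::ring_1 pseries \<Rightarrow> 'r pseries" where
  "slice1 k z = (\<lambda>I. if I k = 0 then z (I(k := 1)) else 0)"

definition in_vars :: "nat \<Rightarrow> 'r::zero pseries \<Rightarrow> bool" where
  "in_vars n w \<longleftrightarrow> (\<forall>J. w J \<noteq> 0 \<longrightarrow> (\<forall>i. i \<notin> {1..n} \<longrightarrow> J i = 0))"

definition vanishing :: "('r \<Rightarrow> real) \<Rightarrow> 'r pseries \<Rightarrow> bool" where
  "vanishing nr w \<longleftrightarrow> (\<forall>e>0. finite {J. e \<le> nr (w J)})"

lemma tate_iff: "tate nr n S w \<longleftrightarrow> (\<forall>I. w I \<in> S) \<and> in_vars n w \<and> vanishing nr w"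
  unfolding tate_def in_vars_def vanishing_def by blast

lemma subst0_eq_iff: "subst0 k x = subst0 k y \<longleftrightarrow> (\<forall>J. J k = 0 \<longrightarrow> x J = y J)"
  unfolding subst0_def fun_eq_iff
proof (intro iffI allI impI)
  fix J :: "nat \<Rightarrow> nat" assume "\<forall>J. (if J k = 0 then x J else 0) = (if J k = 0 then y J else 0)" and "J k = 0"
  from this(1)[rule_format, of J] this(2) show "x J = y J" by simp
qed simp

lemma line_from_coords_along: "(\<lambda>m. from_coords k y (J(k := m))) = line_from_coords (\<lambda>m. y (J(k := m)))"
  by (simp add: fun_eq_iff from_coords_def)

lemma line_to_coords_along: "(\<lambda>m. to_coords nr k f (J(k := m))) = line_to_coords nr (\<lambda>m. f (J(k := m)))"
  by (simp add: fun_eq_iff to_coords_def)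

lemma from_coords_list_append: "from_coords_list (ks @ ls) y = from_coords_list ls (from_coords_list ks y)"
  by (induction ks arbitrary: y) auto

lemma from_coords_diff: "from_coords k (\<lambda>J. x J - y J) = (\<lambda>J. from_coords k x J - from_coords k y J)"
  by (simp add: fun_eq_iff from_coords_def line_from_coords_def)

lemma from_coords_list_diff:
  "from_coords_list ks (\<lambda>J. x J - y J) = (\<lambda>J. from_coords_list ks x J - from_coords_list ks y J)"
  by (induction ks arbitrary: x y) (simp_all add: from_coords_diff)

lemma from_coords_list_mem:
  assumes "subring_of S" and "\<And>J. y J \<in> S" shows "from_coords_list ks y J \<in> S"
  using assms(2)
proof (induction ks arbitrary: y)
  case (Cons k ks)
  have "from_coords k y J' \<in> S" for J'
    using Cons.prems assms(1) unfolding subring_of_def from_coords_def line_from_coords_def by simp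
  then show ?case using Cons.IH by simp
qed simp

lemma slice1_from_coords: "j \<noteq> k \<Longrightarrow> slice1 k (from_coords j z) = from_coords j (slice1 k z)"
  by (auto simp: fun_eq_iff slice1_def from_coords_def fun_upd_twist line_from_coords_def)

lemma slice1_from_coords_list: "k \<notin> set ks \<Longrightarrow> slice1 k (from_coords_list ks z) = from_coords_list ks (slice1 k z)"
  by (induction ks arbitrary: z) (simp_all add: slice1_from_coords)

lemma subst0_from_coords_cong:
  assumes "subst0 k x = subst0 k y" shows "subst0 k (from_coords j x) = subst0 k (from_coords j y)"
proof -
  have agree: "\<forall>J. J k = 0 \<longrightarrow> x J = y J" using assms by (simp add: subst0_eq_iff)
  have "from_coords j x J = from_coords j y J" if "J k = 0" for J
  proof (cases "j = k")
    case False
    then have "(\<lambda>m. x (J(j := m))) = (\<lambda>m. y (J(j := m)))" using agree that by auto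
    then show ?thesis by (simp add: from_coords_def)
  qed (use agree that in \<open>simp add: from_coords_def line_from_coords_def\<close>)
  then show ?thesis by (simp add: subst0_eq_iff)
qed

lemma subst0_to_coords_cong:
  assumes "subst0 k x = subst0 k y" shows "subst0 k (to_coords nr j x) = subst0 k (to_coords nr j y)"
proof -
  have agree: "\<forall>J. J k = 0 \<longrightarrow> x J = y J" using assms by (simp add: subst0_eq_iff)
  have "to_coords nr j x J = to_coords nr j y J" if "J k = 0" for J
  proof (cases "j = k")
    case False
    then have "(\<lambda>m. x (J(j := m))) = (\<lambda>m. y (J(j := m)))" using agree that by auto
    then show ?thesis by (simp add: to_coords_def)
  qed (use agree that in \<open>simp add: to_coords_def line_to_coords_def\<close>)
  then show ?thesis by (simp add: subst0_eq_iff)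
qed

lemma subst0_from_coords_list_cong:
  "subst0 k x = subst0 k y \<Longrightarrow> subst0 k (from_coords_list ks x) = subst0 k (from_coords_list ks y)"
proof (induction ks arbitrary: x y)
  case (Cons j ks)
  show ?case using Cons.IH[OF subst0_from_coords_cong[OF Cons.prems]] by simp
qed simp

lemma subst0_to_coords_list_cong:
  "subst0 k x = subst0 k y \<Longrightarrow> subst0 k (to_coords_list nr ks x) = subst0 k (to_coords_list nr ks y)"
proof (induction ks)
  case (Cons j ks)
  show ?case using subst0_to_coords_cong[OF Cons.IH[OF Cons.prems]] by simp
qed simp

lemma in_vars_from_coords:
  assumes "k \<in> {1..n}" and "in_vars n y" shows "in_vars n (from_coords k y)"
  unfolding in_vars_def
proof (intro allI impI)
  fix J i assume nz: "from_coords k y J \<noteq> 0" and i: "i \<notin> {1..n}"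
  show "J i = 0"
  proof (rule ccontr)
    assume "J i \<noteq> 0"
    have "y (J(k := m)) = 0" for m
    proof (rule ccontr)
      assume "y (J(k := m)) \<noteq> 0"
      then have "(J(k := m)) i = 0" using assms(2) i unfolding in_vars_def by blast
      moreover have "i \<noteq> k" using assms(1) i by auto
      ultimately show False using \<open>J i \<noteq> 0\<close> by simp
    qed
    then have "from_coords k y J = 0" by (simp add: from_coords_def line_from_coords_def)
    then show False using nz by simp
  qed
qed

lemma in_vars_from_coords_list: "set ks \<subseteq> {1..n} \<Longrightarrow> in_vars n y \<Longrightarrow> in_vars n (from_coords_list ks y)"
proof (induction ks arbitrary: y)
  case (Cons k ks)
  show ?case using Cons.IH[OF _ in_vars_from_coords[OF _ Cons.prems(2)]] Cons.prems(1) by simp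
qed simp

lemma subst0_comp: "g 0 = 0 \<Longrightarrow> subst0 k (g \<circ> z) = g \<circ> subst0 k z"
  by (simp add: fun_eq_iff subst0_def)

lemma slice1_comp: "g 0 = 0 \<Longrightarrow> slice1 k (g \<circ> z) = g \<circ> slice1 k z"
  by (simp add: fun_eq_iff slice1_def)

lemma in_vars_comp: assumes "g 0 = 0" and "in_vars n z" shows "in_vars n (g \<circ> z)"
  unfolding in_vars_def
proof (intro allI impI)
  fix J i assume "(g \<circ> z) J \<noteq> 0" and "i \<notin> {1..n}"
  moreover from this(1) have "z J \<noteq> 0" using assms(1) by auto
  ultimately show "J i = 0" using assms(2) unfolding in_vars_def by blast
qed

lemma vanishing_comp: "(\<And>v. nr (g v) \<le> nr v) \<Longrightarrow> vanishing nr z \<Longrightarrow> vanishing nr (g \<circ> z)"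
  unfolding vanishing_def
proof (intro allI impI)
  fix e :: real assume "(\<And>v. nr (g v) \<le> nr v)" "\<forall>e>0. finite {J. e \<le> nr (z J)}" "e > 0"
  then show "finite {J. e \<le> nr ((g \<circ> z) J)}"
    by (auto intro: finite_subset[of _ "{J. e \<le> nr (z J)}"] order_trans)
qed

lemma gauss_le: "(\<And>I. nr (w I) \<le> d) \<Longrightarrow> gauss nr w \<le> d"
  unfolding gauss_def by (rule cSup_least) auto

lemma exists_level:
  fixes Rs :: "nat \<Rightarrow> 'r::minus set"
  assumes mono: "\<And>h. Rs h \<subseteq> Rs (Suc h)" and dense: "\<And>x. \<exists>h. \<exists>y\<in>Rs h. nr (x - y) < \<delta>"
    and "finite Y" "finite A" and C: "\<forall>a\<in>A. \<exists>h'. C a \<subseteq> Rs h'"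
  obtains h where "\<forall>v\<in>Y. \<exists>y\<in>Rs h. nr (v - y) < \<delta>" and "\<forall>a\<in>A. C a \<subseteq> Rs h"
proof -
  obtain hv where hv: "\<And>v. \<exists>y\<in>Rs (hv v). nr (v - y) < \<delta>" using dense by metis
  obtain hc where hc: "\<And>a. a \<in> A \<Longrightarrow> C a \<subseteq> Rs (hc a)" using C by metis
  define h where "h = Max (insert 0 (hv ` Y \<union> hc ` A))"
  have le: "Rs i \<subseteq> Rs h" if "i \<in> hv ` Y \<union> hc ` A" for i
    using that \<open>finite Y\<close> \<open>finite A\<close> unfolding h_def by (intro lift_Suc_mono_le[of Rs, OF mono] Max_ge) auto
  show ?thesis
  proof
    show "\<forall>v\<in>Y. \<exists>y\<in>Rs h. nr (v - y) < \<delta>" using hv le by blast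
    show "\<forall>a\<in>A. C a \<subseteq> Rs h" using hc le by blast
  qed
qed

context complete_ultrametric
begin

lemma vanishing_conv_to_0_line:
  assumes "vanishing nr w" shows "conv_to nr (\<lambda>m. w (J(k := m))) 0"
  unfolding conv_to_0_iff
proof (intro allI impI)
  fix e :: real assume "e > 0"
  have "inj (\<lambda>m. J(k := m))" by (rule injI) (metis fun_upd_same)
  then have "finite ((\<lambda>m. J(k := m)) -` {J. e \<le> nr (w J)})"
    using assms \<open>e > 0\<close> unfolding vanishing_def by (intro finite_vimageI) auto
  then obtain M where "\<forall>m\<in>(\<lambda>m. J(k := m)) -` {J. e \<le> nr (w J)}. m < M"
    using finite_nat_set_iff_bounded by blast
  then show "\<exists>M. \<forall>m\<ge>M. nr (w (J(k := m))) < e" by (metis not_le vimage_Collect_eq mem_Collect_eq)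
qed

lemma to_coords_from_coords:
  assumes "\<And>J. conv_to nr (\<lambda>m. y (J(k := m))) 0" shows "to_coords nr k (from_coords k y) = y"
proof
  fix J
  have "to_coords nr k (from_coords k y) J = line_to_coords nr (line_from_coords (\<lambda>m. y (J(k := m)))) (J k)"
    unfolding to_coords_def line_from_coords_along ..
  also have "\<dots> = y J" using line_to_coords_from_coords[OF assms[of J]] by simp
  finally show "to_coords nr k (from_coords k y) J = y J" .
qed

lemma from_coords_to_coords:
  assumes "\<And>J. conv_to nr (\<lambda>m. f (J(k := m))) 0" shows "from_coords k (to_coords nr k f) = f"
proof
  fix J
  have "from_coords k (to_coords nr k f) J = line_from_coords (line_to_coords nr (\<lambda>m. f (J(k := m)))) (J k)"
    unfolding from_coords_def line_to_coords_along ..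
  also have "\<dots> = f J" using line_from_coords_to_coords[OF assms[of J]] by simp
  finally show "from_coords k (to_coords nr k f) J = f J" .
qed

text \<open>A coordinate of norm \<open>\<ge> e\<close> forces one of the at most three coefficients it is built
  from to have norm \<open>\<ge> e\<close>.\<close>
lemma vanishing_from_coords:
  assumes "vanishing nr y" shows "vanishing nr (from_coords k y)"
  unfolding vanishing_def
proof (intro allI impI)
  fix e :: real assume "e > 0"
  define A where "A = {J. e \<le> nr (y J)}"
  have "finite A" using assms \<open>e > 0\<close> unfolding vanishing_def A_def by blast
  have inj: "inj (\<lambda>J::nat \<Rightarrow> nat. J(k := Suc (J k)))"
    by (rule injI) (metis fun_upd_same fun_upd_triv fun_upd_upd nat.inject)
  have "{J. e \<le> nr (from_coords k y J)} \<subseteq> A \<union> (\<lambda>J. J(k := Suc (J k))) -` A \<union> (\<lambda>I. I(k := 1)) ` A"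
  proof
    fix J assume J: "J \<in> {J. e \<le> nr (from_coords k y J)}"
    show "J \<in> A \<union> (\<lambda>J. J(k := Suc (J k))) -` A \<union> (\<lambda>I. I(k := 1)) ` A"
    proof (rule ccontr)
      assume "\<not> ?thesis"
      then have small: "nr (y J) < e" "nr (y (J(k := Suc (J k)))) < e" "J \<notin> (\<lambda>I. I(k := 1)) ` A"
        by (auto simp: A_def)
      consider "J k = 0" | "J k = 1" | "J k \<ge> 2" by linarith
      then have "nr (from_coords k y J) < e"
      proof cases
        case 1
        then have "J(k := 0) = J" by auto
        with 1 show ?thesis using small(1) by (simp add: from_coords_def line_from_coords_def)
      next
        case 2
        then have "J = (J(k := 0))(k := 1)" by auto
        then have "nr (y (J(k := 0))) < e" using small(3) unfolding A_def by (metis image_eqI mem_Collect_eq not_le)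
        moreover have "J(k := Suc 0) = J" "J(k := 2) = J(k := Suc (J k))" using 2 by auto
        ultimately show ?thesis using 2 small(1,2) by (simp add: from_coords_def line_from_coords_def diff_less)
      next
        case 3
        then show ?thesis using small(1,2) by (simp add: from_coords_def line_from_coords_def diff_less)
      qed
      then show False using J by simp
    qed
  qed
  moreover have "finite (A \<union> (\<lambda>J. J(k := Suc (J k))) -` A \<union> (\<lambda>I. I(k := 1)) ` A)"
    using \<open>finite A\<close> inj by (simp add: finite_vimageI)
  ultimately show "finite {J. e \<le> nr (from_coords k y J)}" by (rule finite_subset)
qed

text \<open>A tail sum of norm \<open>\<ge> e\<close> contains a term of norm \<open>\<ge> e\<close> further out on the same line.\<close>
lemma vanishing_to_coords:
  assumes f: "vanishing nr f" shows "vanishing nr (to_coords nr k f)"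
  unfolding vanishing_def
proof (intro allI impI)
  fix e :: real assume e: "e > 0"
  define A where "A = {J. e \<le> nr (f J)}"
  have "finite A" using f e unfolding vanishing_def A_def by blast
  have "{J. e \<le> nr (to_coords nr k f J)} \<subseteq> (\<Union>I\<in>A. (\<lambda>c. I(k := c)) ` {..Suc (I k)})"
  proof
    fix J assume "J \<in> {J. e \<le> nr (to_coords nr k f J)}"
    then have big: "e \<le> nr (to_coords nr k f J)" by simp
    note line = vanishing_conv_to_0_line[OF f, of J k]
    have "\<exists>m. e \<le> nr (f (J(k := m))) \<and> J k \<le> Suc m"
    proof -
      consider "J k = 0" | "J k = 1" | "J k \<ge> 2" by linarith
      then show ?thesis
      proof cases
        case 1 then show ?thesis using big by (intro exI[of _ 0]) (simp add: to_coords_def line_to_coords_def)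
      next
        case 2
        then have "\<not> (\<forall>m. nr (f (J(k := m))) < e)"
          using big series_sum_less[OF line e] by (force simp: to_coords_def line_to_coords_def)
        then show ?thesis using 2 by (auto simp: not_less)
      next
        case 3
        then have "\<not> (\<forall>j. nr (f (J(k := j + J k))) < e)"
          using big series_sum_less[OF conv_to_0_shift[OF line] e]
          by (force simp: to_coords_def line_to_coords_def)
        then obtain j where "e \<le> nr (f (J(k := j + J k)))" by (auto simp: not_less)
        then show ?thesis by (intro exI[of _ "j + J k"]) simp
      qed
    qed
    then obtain m where "J(k := m) \<in> A" "J k \<le> Suc m" by (auto simp: A_def)
    moreover have "J = (J(k := m))(k := J k)" by simp
    ultimately show "J \<in> (\<Union>I\<in>A. (\<lambda>c. I(k := c)) ` {..Suc (I k)})"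
      by (metis (no_types, lifting) UN_iff atMost_iff fun_upd_same image_eqI)
  qed
  moreover have "finite (\<Union>I\<in>A. (\<lambda>c. I(k := c)) ` {..Suc (I k)})" using \<open>finite A\<close> by blast
  ultimately show "finite {J. e \<le> nr (to_coords nr k f J)}" by (rule finite_subset)
qed

lemma vanishing_from_coords_list: "vanishing nr y \<Longrightarrow> vanishing nr (from_coords_list ks y)"
proof (induction ks arbitrary: y)
  case (Cons k ks) show ?case using Cons.IH[OF vanishing_from_coords[OF Cons.prems]] by simp
qed simp

lemma vanishing_to_coords_list: "vanishing nr f \<Longrightarrow> vanishing nr (to_coords_list nr ks f)"
proof (induction ks)
  case (Cons k ks) show ?case using vanishing_to_coords[OF Cons.IH[OF Cons.prems]] by simp
qed simp

lemma to_coords_list_from_coords_list: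
  "vanishing nr y \<Longrightarrow> to_coords_list nr ks (from_coords_list ks y) = y"
proof (induction ks arbitrary: y)
  case (Cons k ks)
  have "to_coords_list nr (k # ks) (from_coords_list (k # ks) y)
      = to_coords nr k (to_coords_list nr ks (from_coords_list ks (from_coords k y)))" by simp
  also have "\<dots> = to_coords nr k (from_coords k y)"
    using Cons.IH[OF vanishing_from_coords[OF Cons.prems]] by simp
  also have "\<dots> = y" using to_coords_from_coords vanishing_conv_to_0_line[OF Cons.prems] by blast
  finally show ?case .
qed simp

lemma from_coords_list_to_coords_list:
  "vanishing nr f \<Longrightarrow> from_coords_list ks (to_coords_list nr ks f) = f"
proof (induction ks arbitrary: f)
  case (Cons k ks)
  have "from_coords_list (k # ks) (to_coords_list nr (k # ks) f)
      = from_coords_list ks (from_coords k (to_coords nr k (to_coords_list nr ks f)))" by simp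
  also have "\<dots> = from_coords_list ks (to_coords_list nr ks f)"
    using from_coords_to_coords vanishing_conv_to_0_line[OF vanishing_to_coords_list[OF Cons.prems]]
    by metis
  also have "\<dots> = f" using Cons.IH[OF Cons.prems] .
  finally show ?case .
qed simp

lemma from_coords_list_inj:
  assumes "vanishing nr x" "vanishing nr y" "from_coords_list ks x = from_coords_list ks y"
  shows "x = y"
proof -
  have "to_coords_list nr ks (from_coords_list ks x) = to_coords_list nr ks (from_coords_list ks y)"
    using assms(3) by simp
  then show ?thesis using assms(1,2) by (simp add: to_coords_list_from_coords_list)
qed

lemma to_coords_list_mem:
  assumes S: "complete_subring nr S" and f: "\<And>J. f J \<in> S" "vanishing nr f"
  shows "to_coords_list nr ks f J \<in> S"
proof (induction ks arbitrary: J)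
  case (Cons k ks)
  note line = vanishing_conv_to_0_line[OF vanishing_to_coords_list[OF f(2)], where k = k]
  show ?case
    using series_sum_mem[OF S _ line] series_sum_mem[OF S _ conv_to_0_shift[OF line]] Cons.IH
    by (simp add: to_coords_def line_to_coords_def)
qed (simp add: f)

lemma from_coords_list_less: "(\<And>J. nr (w J) < d) \<Longrightarrow> nr (from_coords_list ks w J) < d"
proof (induction ks arbitrary: w)
  case (Cons k ks)
  have "nr (from_coords k w J') < d" for J'
    unfolding from_coords_def by (rule line_from_coords_less) (rule Cons.prems)
  then show ?case using Cons.IH by simp
qed simp

lemma in_vars_to_coords:
  assumes "k \<in> {1..n}" and "in_vars n f" shows "in_vars n (to_coords nr k f)"
  unfolding in_vars_def
proof (intro allI impI)
  fix J i assume nz: "to_coords nr k f J \<noteq> 0" and i: "i \<notin> {1..n}"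
  show "J i = 0"
  proof (rule ccontr)
    assume "J i \<noteq> 0"
    have "f (J(k := m)) = 0" for m
    proof (rule ccontr)
      assume "f (J(k := m)) \<noteq> 0"
      then have "(J(k := m)) i = 0" using assms(2) i unfolding in_vars_def by blast
      moreover have "i \<noteq> k" using assms(1) i by auto
      ultimately show False using \<open>J i \<noteq> 0\<close> by simp
    qed
    then have "to_coords nr k f J = 0" by (simp add: to_coords_def line_to_coords_def)
    then show False using nz by simp
  qed
qed

lemma in_vars_to_coords_list: "set ks \<subseteq> {1..n} \<Longrightarrow> in_vars n f \<Longrightarrow> in_vars n (to_coords_list nr ks f)"
proof (induction ks)
  case (Cons k ks)
  show ?case using in_vars_to_coords[OF _ Cons.IH] Cons.prems by simp
qed simp

lemma subst1_from_coords_other: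
  assumes "j \<noteq> k" and w: "vanishing nr w"
  shows "subst1 nr k (from_coords j w) = from_coords j (subst1 nr k w)"
proof
  fix I :: "nat \<Rightarrow> nat"
  show "subst1 nr k (from_coords j w) I = from_coords j (subst1 nr k w) I"
  proof (cases "I k = 0")
    case True
    define l where "l c = (\<lambda>m. w (I(j := c, k := m)))" for c
    have l: "conv_to nr (l c) 0" for c unfolding l_def by (rule vanishing_conv_to_0_line[OF w])
    have "subst1 nr k (from_coords j w) I = series_sum nr (\<lambda>m. line_from_coords (\<lambda>c. l c m) (I j))"
      using True assms(1) unfolding subst1_def from_coords_def l_def by (simp add: fun_upd_twist)
    also have "\<dots> = line_from_coords (\<lambda>c. series_sum nr (l c)) (I j)"
      using series_sum_line_from_coords_family[OF l] .
    also have "\<dots> = from_coords j (subst1 nr k w) I"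
      using True assms(1) unfolding subst1_def from_coords_def l_def by simp
    finally show ?thesis .
  next
    case False
    then have "subst1 nr k w (I(j := c)) = 0" for c using assms(1) by (simp add: subst1_def)
    then show ?thesis using False by (simp add: subst1_def from_coords_def line_from_coords_def)
  qed
qed

lemma subst1_from_coords_list_other:
  "k \<notin> set ks \<Longrightarrow> vanishing nr w \<Longrightarrow> subst1 nr k (from_coords_list ks w) = from_coords_list ks (subst1 nr k w)"
proof (induction ks arbitrary: w)
  case (Cons j ks)
  then show ?case
    using Cons.IH[OF _ vanishing_from_coords] subst1_from_coords_other[of j k w] by simp
qed simp

lemma subst1_from_coords_same:
  assumes "vanishing nr z" shows "subst1 nr k (from_coords k z) = slice1 k z"
proof
  fix I :: "nat \<Rightarrow> nat"
  show "subst1 nr k (from_coords k z) I = slice1 k z I"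
    unfolding subst1_def slice1_def line_from_coords_along
    using series_sum_line_from_coords[OF vanishing_conv_to_0_line[OF assms]] by simp
qed

lemma vanishing_slice1:
  assumes "vanishing nr z" shows "vanishing nr (slice1 k z)"
  unfolding vanishing_def
proof (intro allI impI)
  fix e :: real assume "e > 0"
  then have fin: "finite {J. e \<le> nr (z J)}" using assms unfolding vanishing_def by blast
  have sub: "{J. e \<le> nr (slice1 k z J)} \<subseteq> (\<lambda>J. J(k := 0)) ` {J. e \<le> nr (z J)}"
  proof
    fix J assume "J \<in> {J. e \<le> nr (slice1 k z J)}"
    then have "J k = 0" "e \<le> nr (z (J(k := 1)))" using \<open>e > 0\<close> by (auto simp: slice1_def split: if_splits)
    moreover from this(1) have "J = (J(k := 1))(k := 0)" by auto
    ultimately show "J \<in> (\<lambda>J. J(k := 0)) ` {J. e \<le> nr (z J)}" by blast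
  qed
  show "finite {J. e \<le> nr (slice1 k z J)}" using finite_subset[OF sub finite_imageI[OF fin]] .
qed

lemma subst1_from_coords_list:
  assumes "distinct ks" "k \<in> set ks" and y: "vanishing nr y"
  shows "subst1 nr k (from_coords_list ks y) = from_coords_list (remove1 k ks) (slice1 k y)"
proof -
  obtain xs zs where ks: "ks = xs @ k # zs" using split_list[OF assms(2)] by blast
  then have "k \<notin> set xs" "k \<notin> set zs" using assms(1) by auto
  have "subst1 nr k (from_coords_list ks y) = subst1 nr k (from_coords_list zs (from_coords k (from_coords_list xs y)))"
    by (simp add: ks from_coords_list_append)
  also have "\<dots> = from_coords_list zs (subst1 nr k (from_coords k (from_coords_list xs y)))"
    using \<open>k \<notin> set zs\<close> y
    by (intro subst1_from_coords_list_other vanishing_from_coords vanishing_from_coords_list)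
  also have "\<dots> = from_coords_list zs (slice1 k (from_coords_list xs y))"
    using y by (simp add: subst1_from_coords_same vanishing_from_coords_list)
  also have "\<dots> = from_coords_list zs (from_coords_list xs (slice1 k y))"
    using \<open>k \<notin> set xs\<close> by (simp add: slice1_from_coords_list)
  finally show ?thesis
    using \<open>k \<notin> set xs\<close> by (simp add: ks from_coords_list_append remove1_append)
qed

lemma subst1_from_coords_list_eq_iff:
  assumes "distinct ks" "k \<in> set ks" "vanishing nr x" "vanishing nr y"
  shows "subst1 nr k (from_coords_list ks x) = subst1 nr k (from_coords_list ks y) \<longleftrightarrow> slice1 k x = slice1 k y"
  unfolding subst1_from_coords_list[OF assms(1,2,3)] subst1_from_coords_list[OF assms(1,2,4)]
proof
  assume "from_coords_list (remove1 k ks) (slice1 k x) = from_coords_list (remove1 k ks) (slice1 k y)"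
  then show "slice1 k x = slice1 k y"
    by (rule from_coords_list_inj[OF vanishing_slice1[OF assms(3)] vanishing_slice1[OF assms(4)]])
qed simp

lemma slice1_eq_to_coords_list_subst1:
  assumes "distinct ks" "k \<in> set ks" "vanishing nr y"
  shows "slice1 k y = to_coords_list nr (remove1 k ks) (subst1 nr k (from_coords_list ks y))"
  by (simp add: subst1_from_coords_list[OF assms] to_coords_list_from_coords_list vanishing_slice1 assms(3))

lemma subst1_eq_self:
  assumes "\<And>J. w J \<noteq> 0 \<Longrightarrow> J k = 0" shows "subst1 nr k w = w"
proof
  fix I :: "nat \<Rightarrow> nat"
  show "subst1 nr k w I = w I"
  proof (cases "I k = 0")
    case True
    have "w (I(k := m)) = 0" if "m \<noteq> 0" for m using assms[of "I(k := m)"] that by auto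
    then have "series_sum nr (\<lambda>m. w (I(k := m))) = w (I(k := 0))" by (rule series_sum_single)
    moreover have "I(k := 0) = I" using True by auto
    ultimately show ?thesis using True by (simp add: subst1_def)
  next
    case False
    then show ?thesis using assms[of I] by (auto simp: subst1_def)
  qed
qed

text \<open>Every approximable value has an approximant that is no larger: take \<open>0\<close> for
  \<open>nr v < \<delta>\<close>, otherwise any approximant, by the ultrametric inequality.\<close>
lemma approximant_le:
  assumes "0 \<in> S" and "\<exists>y\<in>S. nr (v - y) < \<delta>"
  shows "\<exists>y\<in>S. nr (v - y) < \<delta> \<and> nr y \<le> nr v"
proof (cases "nr v < \<delta>")
  case True
  then show ?thesis using assms(1) nr_nonneg[of v] by (intro bexI[of _ 0]) simp_all
next
  case False
  then obtain y where "y \<in> S" "nr (v - y) < \<delta>" using assms(2) by blast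
  moreover have "nr y \<le> nr v" using nr_le_max_diff[of y v] \<open>nr (v - y) < \<delta>\<close> False by linarith
  ultimately show ?thesis by blast
qed

lemma rounding_exists:
  assumes "0 \<in> S"
  obtains g where "\<And>v. v \<in> S \<Longrightarrow> g v = v" and "\<And>v. nr (g v) \<le> nr v"
    and "\<And>v. \<exists>y\<in>S. nr (v - y) < \<delta> \<Longrightarrow> g v \<in> S \<and> nr (v - g v) < \<delta>"
proof
  define g where "g v = (if v \<in> S then v
    else if \<exists>y\<in>S. nr (v - y) < \<delta> then SOME y. y \<in> S \<and> nr (v - y) < \<delta> \<and> nr y \<le> nr v else v)" for v
  have some: "g v \<in> S \<and> nr (v - g v) < \<delta> \<and> nr (g v) \<le> nr v" if "v \<notin> S" "\<exists>y\<in>S. nr (v - y) < \<delta>" for v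
    using someI_ex[OF approximant_le[OF assms that(2), unfolded Bex_def]] that by (simp add: g_def)
  show "\<And>v. v \<in> S \<Longrightarrow> g v = v" by (simp add: g_def)
  show "nr (g v) \<le> nr v" for v using some[of v] by (cases "v \<in> S \<or> \<not> (\<exists>y\<in>S. nr (v - y) < \<delta>)") (auto simp: g_def)
  show "g v \<in> S \<and> nr (v - g v) < \<delta>" if "\<exists>y\<in>S. nr (v - y) < \<delta>" for v
  proof -
    have "0 < \<delta>" using that nr_nonneg by (meson le_less_trans)
    then show ?thesis using some[of v] that by (cases "v \<in> S") (auto simp: g_def)
  qed
qed

lemma tate_from_coords_list_comp:
  assumes "set ks \<subseteq> {1..n}" "subring_of S" "g 0 = 0" "\<And>v. nr (g v) \<le> nr v"
    and "\<And>J. g (x J) \<in> S" "in_vars n x" "vanishing nr x"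
  shows "tate nr n S (from_coords_list ks (g \<circ> x))"
  unfolding tate_iff
  using from_coords_list_mem[OF assms(2), of "g \<circ> x"] assms(5)
    in_vars_from_coords_list[OF assms(1) in_vars_comp[where g = g, OF assms(3,6)]]
    vanishing_from_coords_list[OF vanishing_comp[where g = g, OF assms(4,7)]]
  by simp

lemma gauss_from_coords_list_diff_le:
  assumes "\<And>J. nr (x J - y J) < \<delta>"
  shows "gauss nr (\<lambda>I. from_coords_list ks x I - from_coords_list ks y I) \<le> \<delta>"
  unfolding from_coords_list_diff[symmetric]
  using from_coords_list_less[where w = "\<lambda>J. x J - y J", OF assms] by (intro gauss_le less_imp_le)

lemma subst0_from_coords_list_comp_cong:
  assumes "g 0 = 0" "vanishing nr x" "vanishing nr y"
    and "subst0 k (from_coords_list ks x) = subst0 k (from_coords_list ks y)"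
  shows "subst0 k (from_coords_list ks (g \<circ> x)) = subst0 k (from_coords_list ks (g \<circ> y))"
proof -
  have "subst0 k x = subst0 k y"
    using subst0_to_coords_list_cong[OF assms(4), where nr = nr and ks = ks]
    by (simp only: to_coords_list_from_coords_list assms(2,3))
  then have "subst0 k (g \<circ> x) = subst0 k (g \<circ> y)" by (simp only: subst0_comp[where g = g, OF assms(1)])
  then show ?thesis by (rule subst0_from_coords_list_cong)
qed

lemma subst1_from_coords_list_comp_cong:
  assumes "distinct ks" "k \<in> set ks" "g 0 = 0" "\<And>v. nr (g v) \<le> nr v" "vanishing nr x" "vanishing nr y"
    and "subst1 nr k (from_coords_list ks x) = subst1 nr k (from_coords_list ks y)"
  shows "subst1 nr k (from_coords_list ks (g \<circ> x)) = subst1 nr k (from_coords_list ks (g \<circ> y))"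
proof -
  have "slice1 k x = slice1 k y" using assms(7) subst1_from_coords_list_eq_iff[OF assms(1,2,5,6)] by blast
  then have "slice1 k (g \<circ> x) = slice1 k (g \<circ> y)" by (simp only: slice1_comp[where g = g, OF assms(3)])
  then show ?thesis
    using subst1_from_coords_list_eq_iff[OF assms(1,2) vanishing_comp[where g = g, OF assms(4,5)] vanishing_comp[where g = g, OF assms(4,6)]]
    by blast
qed

lemma subst1_from_coords_list_comp_fixed:
  assumes "distinct ks" "k \<in> set ks" "complete_subring nr S" "\<And>v. v \<in> S \<Longrightarrow> g v = v" "g 0 = 0"
    and "\<And>v. nr (g v) \<le> nr v" "vanishing nr x" "\<And>I. subst1 nr k (from_coords_list ks x) I \<in> S"
  shows "subst1 nr k (from_coords_list ks (g \<circ> x)) = subst1 nr k (from_coords_list ks x)"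
proof -
  have "vanishing nr (subst1 nr k (from_coords_list ks x))"
    unfolding subst1_from_coords_list[OF assms(1,2,7)]
    by (rule vanishing_from_coords_list[OF vanishing_slice1[OF assms(7)]])
  then have "slice1 k x J \<in> S" for J
    unfolding slice1_eq_to_coords_list_subst1[OF assms(1,2,7)] by (rule to_coords_list_mem[OF assms(3,8)])
  then have "slice1 k (g \<circ> x) = slice1 k x" by (simp add: slice1_comp[where g = g, OF assms(5)] fun_eq_iff assms(4))
  then show ?thesis
    using subst1_from_coords_list_eq_iff[OF assms(1,2) vanishing_comp[where g = g, OF assms(6,7)] assms(7)] by blast
qed

lemma subst1_comp_fixed_outside_vars:
  assumes "k \<notin> {1..n}" "in_vars n x" "g 0 = 0" "\<And>v. v \<in> S \<Longrightarrow> g v = v" "\<And>I. subst1 nr k x I \<in> S"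
  shows "subst1 nr k (g \<circ> x) = subst1 nr k x"
proof -
  have off: "J k = 0" if "x J \<noteq> 0" for J using assms(1,2) that unfolding in_vars_def by blast
  then have x: "subst1 nr k x = x" by (rule subst1_eq_self)
  have "subst1 nr k (g \<circ> x) = g \<circ> x" by (rule subst1_eq_self) (metis assms(3) comp_apply off)
  also have "\<dots> = x" using assms(4,5) unfolding x by (simp add: fun_eq_iff)
  finally show ?thesis unfolding x .
qed

lemma rounding_of_vanishing_family:
  fixes x :: "'i \<Rightarrow> 'r pseries"
  assumes "\<And>h. 0 \<in> Rs h" "\<And>h. Rs h \<subseteq> Rs (Suc h)" "\<And>v. \<exists>h. \<exists>y\<in>Rs h. nr (v - y) < \<delta>"
    and "finite I" "\<And>a. a \<in> I \<Longrightarrow> vanishing nr (x a)" "\<delta> > 0"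
    and "finite A" "\<forall>a\<in>A. \<exists>h'. C a \<subseteq> Rs h'"
  obtains h g where "\<And>v. v \<in> Rs h \<Longrightarrow> g v = v" "\<And>v. nr (g v) \<le> nr v" "\<forall>a\<in>A. C a \<subseteq> Rs h"
    and "\<And>a J. a \<in> I \<Longrightarrow> g (x a J) \<in> Rs h \<and> nr (x a J - g (x a J)) < \<delta>"
proof -
  define Y where "Y = (\<Union>a\<in>I. x a ` {J. \<delta> \<le> nr (x a J)})"
  have "finite Y" unfolding Y_def
    using assms(4-6) unfolding vanishing_def by (intro finite_UN_I finite_imageI) blast+
  then obtain h where h: "\<forall>v\<in>Y. \<exists>y\<in>Rs h. nr (v - y) < \<delta>" "\<forall>a\<in>A. C a \<subseteq> Rs h"
    by (rule exists_level[OF assms(2,3) _ assms(7,8)])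
  obtain g where g: "\<And>v. v \<in> Rs h \<Longrightarrow> g v = v" "\<And>v. nr (g v) \<le> nr v"
    and round: "\<And>v. \<exists>y\<in>Rs h. nr (v - y) < \<delta> \<Longrightarrow> g v \<in> Rs h \<and> nr (v - g v) < \<delta>"
    using rounding_exists[OF assms(1)] by blast
  have "g (x a J) \<in> Rs h \<and> nr (x a J - g (x a J)) < \<delta>" if "a \<in> I" for a J
  proof (rule round)
    show "\<exists>y\<in>Rs h. nr (x a J - y) < \<delta>"
    proof (cases "\<delta> \<le> nr (x a J)")
      case True
      then show ?thesis using h(1) that unfolding Y_def by blast
    next
      case False
      then show ?thesis using assms(1)[of h] by (intro bexI[of _ 0]) simp_all
    qed
  qed
  then show ?thesis using that g h(2) by blast
qed

end

theorem propositionA6: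
  fixes nk :: "'k::field \<Rightarrow> real"
    and sm :: "'k \<Rightarrow> 'r::ring_1 \<Rightarrow> 'r"
    and nr :: "'r \<Rightarrow> real"
    and Rs :: "nat \<Rightarrow> 'r set"
    and n N :: nat
    and s :: "nat \<Rightarrow> 'r pseries"
    and e :: real
  assumes "complete_nonarch_field nk"
    and "banach_algebra nk sm nr"
    and "\<And>h. complete_subring nr (Rs h)"
    and "\<And>h. Rs h \<subseteq> Rs (Suc h)"
    and "\<And>x d. d > 0 \<Longrightarrow> \<exists>h. \<exists>y\<in>Rs h. nr (x - y) < d"
    and "\<And>a. a \<in> {1..N} \<Longrightarrow> tate nr n UNIV (s a)"
    and "e > 0"
  shows "\<exists>h. \<exists>t :: nat \<Rightarrow> 'r pseries.
     (\<forall>a\<in>{1..N}. tate nr n (Rs h) (t a)) \<and>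
     (\<forall>a\<in>{1..N}. gauss nr (\<lambda>I. s a I - t a I) < e) \<and>
     (\<forall>a\<in>{1..N}. \<forall>b\<in>{1..N}. \<forall>k\<in>{1..n}.
        subst0 k (s a) = subst0 k (s b) \<longrightarrow> subst0 k (t a) = subst0 k (t b)) \<and>
     (\<forall>a\<in>{1..N}. \<forall>b\<in>{1..N}. \<forall>k\<in>{1..n}.
        subst1 nr k (s a) = subst1 nr k (s b) \<longrightarrow> subst1 nr k (t a) = subst1 nr k (t b)) \<and>
     (\<forall>a\<in>{1..N}. (\<exists>h'. tate nr n (Rs h') (subst1 nr 1 (s a))) \<longrightarrow>
        subst1 nr 1 (t a) = subst1 nr 1 (s a))"
proof -
  interpret complete_ultrametric nr using assms(1,2) by (rule banach_algebra_complete_ultrametric)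
  define \<delta> where "\<delta> = e / 2"
  have \<delta>: "\<delta> > 0" "\<delta> < e" using \<open>e > 0\<close> by (simp_all add: \<delta>_def)
  define ks where "ks = [1..<Suc n]"
  define x where "x a = to_coords_list nr ks (s a)" for a
  have ks: "distinct ks" "set ks = {1..n}" unfolding ks_def by auto
  have s: "in_vars n (s a)" "vanishing nr (s a)" "s a = from_coords_list ks (x a)" if "a \<in> {1..N}" for a
    using assms(6)[OF that] by (simp_all add: tate_iff x_def from_coords_list_to_coords_list)
  have x: "in_vars n (x a)" "vanishing nr (x a)" if "a \<in> {1..N}" for a
    using s(1,2)[OF that] ks(2) by (simp_all add: x_def in_vars_to_coords_list vanishing_to_coords_list)
  define A where "A = {a \<in> {1..N}. \<exists>h'. tate nr n (Rs h') (subst1 nr 1 (s a))}"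
  have A: "finite A" "\<forall>a\<in>A. \<exists>h'. range (subst1 nr 1 (s a)) \<subseteq> Rs h'" unfolding A_def tate_iff by auto
  have S: "complete_subring nr (Rs h)" "subring_of (Rs h)" "0 \<in> Rs h" for h
    using assms(3)[of h] unfolding complete_subring_def subring_of_def by blast+
  obtain h g where g: "\<And>v. v \<in> Rs h \<Longrightarrow> g v = v" "\<And>v. nr (g v) \<le> nr v"
    and fixed: "\<forall>a\<in>A. range (subst1 nr 1 (s a)) \<subseteq> Rs h"
    and approx: "\<And>a J. a \<in> {1..N} \<Longrightarrow> g (x a J) \<in> Rs h \<and> nr (x a J - g (x a J)) < \<delta>"
    by (rule rounding_of_vanishing_family[where I = "{1..N}" and x = x,
          OF S(3) assms(4) assms(5)[OF \<delta>(1)] finite_atLeastAtMost x(2) \<delta>(1) A]) blast+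
  have g0: "g 0 = 0" using g(1)[OF S(3)] .
  define t where "t a = from_coords_list ks (g \<circ> x a)" for a
  show ?thesis
  proof (intro exI[of _ h] exI[of _ t] conjI ballI impI)
    fix a assume a: "a \<in> {1..N}"
    show "tate nr n (Rs h) (t a)"
      unfolding t_def using tate_from_coords_list_comp[where g = g, OF _ S(2) g0 g(2) _ x[OF a]] conjunct1[OF approx[OF a]] ks by simp
    have "gauss nr (\<lambda>I. s a I - t a I) \<le> \<delta>"
      unfolding t_def s(3)[OF a] using conjunct2[OF approx[OF a]] by (intro gauss_from_coords_list_diff_le) simp
    then show "gauss nr (\<lambda>I. s a I - t a I) < e" using \<delta>(2) by linarith
  next
    fix a b k assume a: "a \<in> {1..N}" and b: "b \<in> {1..N}" and k: "k \<in> {1..n}"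
    show "subst0 k (t a) = subst0 k (t b)" if "subst0 k (s a) = subst0 k (s b)"
      unfolding t_def using that s(3)[OF a] s(3)[OF b]
      by (intro subst0_from_coords_list_comp_cong[where g = g, OF g0 x(2)[OF a] x(2)[OF b]]) simp
    show "subst1 nr k (t a) = subst1 nr k (t b)" if "subst1 nr k (s a) = subst1 nr k (s b)"
      unfolding t_def using that s(3)[OF a] s(3)[OF b] ks k
      by (intro subst1_from_coords_list_comp_cong[where g = g, OF ks(1) _ g0 g(2) x(2)[OF a] x(2)[OF b]]) simp_all
  next
    fix a assume a: "a \<in> {1..N}" and "\<exists>h'. tate nr n (Rs h') (subst1 nr 1 (s a))"
    then have in_Rs: "subst1 nr 1 (s a) I \<in> Rs h" for I using fixed unfolding A_def by blast
    show "subst1 nr 1 (t a) = subst1 nr 1 (s a)"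
    proof (cases "n = 0")
      case True
      then have "t a = g \<circ> s a" using s(3)[OF a] by (simp add: t_def ks_def)
      moreover have "subst1 nr 1 (g \<circ> s a) = subst1 nr 1 (s a)"
        using True by (intro subst1_comp_fixed_outside_vars[where g = g, OF _ s(1)[OF a] g0 g(1) in_Rs]) simp
      ultimately show ?thesis by simp
    next
      case False
      then show ?thesis unfolding t_def using s(3)[OF a] in_Rs ks
        by (simp add: subst1_from_coords_list_comp_fixed[where g = g, OF ks(1) _ S(1) g(1) g0 g(2) x(2)[OF a]])
    qed
  qed
qed

end
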